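(* Let $x=[a_0,a_1,a_2,\ldots]\in\mathbb{R}\setminus\mathbb{Q}$ with convergents $s_k/t_k$, and let $k\ge 0$ be such that $t_k$ and $t_{k+1}$ are both odd. Then $$\left(\frac{s_k}{t_k}\right)=\left(\frac{s_{k+1}}{t_{k+1}}\right),$$ except when either ($t_k\equiv 1\pmod 4$, $t_{k+1}\equiv 3\pmod 4$ and $k$ is odd) or ($t_k\equiv 3\pmod 4$, $t_{k+1}\equiv 1\pmod 4$ and $k$ is even); in these two exceptional cases $$\left(\frac{s_k}{t_k}\right)=-\left(\frac{s_{k+1}}{t_{k+1}}\right).$$
   Context: For $x\in\mathbb{R}\setminus\mathbb{Q}$ with regular continued fraction expansion $x=[a_0,a_1,a_2,\ldots]$ ($a_0\in\mathbb{Z}$, $a_i\ge1$ for $i\ge1$), the convergents $s_k/t_k$ are defined by $s_{-1}=1$, $s_0=a_0$, $s_k=a_ks_{k-1}+s_{k-2}$ and $t_{-1}=0$, $t_0=1$, $t_k=a_kt_{k-1}+t_{k-2}$ for $k\ge1$. For an odd natural number $n$ and an integer $m$ coprime to $n$, $\left(\frac{m}{n}\right)$ denotes the Jacobi symbol (equal to $1$ if $n=1$). *)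

theory Defs
  imports "HOL-Number_Theory.Number_Theory"
begin

fun cf_rem :: "real \<Rightarrow> nat \<Rightarrow> real" where
  "cf_rem x 0 = x"
| "cf_rem x (Suc n) = 1 / frac (cf_rem x n)"

definition cf_a :: "real \<Rightarrow> nat \<Rightarrow> int" where
  "cf_a x n = \<lfloor>cf_rem x n\<rfloor>"

text \<open>Convergent numerators s_k and denominators t_k (k \<ge> 0), with
  s_{-1} = 1, s_0 = a_0, t_{-1} = 0, t_0 = 1.\<close>
fun cf_s :: "real \<Rightarrow> nat \<Rightarrow> int" where
  "cf_s x 0 = cf_a x 0"
| "cf_s x (Suc 0) = cf_a x 1 * cf_a x 0 + 1"
| "cf_s x (Suc (Suc n)) = cf_a x (Suc (Suc n)) * cf_s x (Suc n) + cf_s x n"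

fun cf_t :: "real \<Rightarrow> nat \<Rightarrow> int" where
  "cf_t x 0 = 1"
| "cf_t x (Suc 0) = cf_a x 1"
| "cf_t x (Suc (Suc n)) = cf_a x (Suc (Suc n)) * cf_t x (Suc n) + cf_t x n"

definition Jacobi :: "int \<Rightarrow> int \<Rightarrow> int" where
  "Jacobi m n = (\<Prod>p\<in>prime_factors n. Legendre m p ^ multiplicity p n)"

end

theory Submission
  imports Defs
begin

text \<open>The convergents satisfy \<open>s\<^sub>k\<^sub>+\<^sub>1 t\<^sub>k - s\<^sub>k t\<^sub>k\<^sub>+\<^sub>1 = (-1)\<^sup>k\<close>, hence
  \<open>s\<^sub>k t\<^sub>k\<^sub>+\<^sub>1 \<equiv> -(-1)\<^sup>k (mod t\<^sub>k)\<close> and \<open>s\<^sub>k\<^sub>+\<^sub>1 t\<^sub>k \<equiv> (-1)\<^sup>k (mod t\<^sub>k\<^sub>+\<^sub>1)\<close>.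
  Multiplying the two resulting Jacobi symbol identities, the factor
  \<open>(t\<^sub>k\<^sub>+\<^sub>1/t\<^sub>k)(t\<^sub>k/t\<^sub>k\<^sub>+\<^sub>1)\<close> is the sign of Jacobi reciprocity, and what remains is
  \<open>(-1/t\<^sub>k)\<close> or \<open>(-1/t\<^sub>k\<^sub>+\<^sub>1)\<close> according to the parity of \<open>k\<close>; the total sign is
  \<open>-1\<close> exactly in the two exceptional cases.\<close>

lemma euler_criterion_int:
  fixes p :: int
  assumes "prime p" "p > 2"
  shows "[Legendre a p = a ^ nat ((p - 1) div 2)] (mod p)"
proof -
  have "prime (nat p)" "2 < nat p" using assms by auto
  from euler_criterion[OF this, of a] assms show ?thesis
    by (simp add: nat_diff_distrib nat_div_distrib)
qed

text \<open>Euler's criterion pins the Legendre symbol down among \<open>{-1, 0, 1}\<close>,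
  since distinct elements of that set are incongruent modulo \<open>p > 2\<close>.\<close>

lemma Legendre_eqI:
  fixes p :: int
  assumes "prime p" "p > 2" "b \<in> {-1, 0, 1}"
    and "[b = a ^ nat ((p - 1) div 2)] (mod p)"
  shows "Legendre a p = b"
proof (rule ccontr)
  assume ne: "Legendre a p \<noteq> b"
  have "[Legendre a p = b] (mod p)"
    using euler_criterion_int[OF assms(1,2)] assms(4) by (meson cong_sym cong_trans)
  then have "p dvd Legendre a p - b" by (simp add: cong_iff_dvd_diff)
  then have "p \<le> \<bar>Legendre a p - b\<bar>"
    using ne assms(2) dvd_imp_le_int[of "Legendre a p - b" p] by simp
  moreover have "\<bar>Legendre a p - b\<bar> \<le> 2"
    using assms(3) by (auto simp: Legendre_def)
  ultimately show False using assms(2) by simp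
qed

lemma Legendre_mult_left:
  fixes p :: int
  assumes "prime p" "p > 2"
  shows "Legendre (a * b) p = Legendre a p * Legendre b p"
proof (rule Legendre_eqI[OF assms])
  show "Legendre a p * Legendre b p \<in> {-1, 0, 1}" by (auto simp: Legendre_def)
  show "[Legendre a p * Legendre b p = (a * b) ^ nat ((p - 1) div 2)] (mod p)"
    unfolding power_mult_distrib
    by (intro cong_mult euler_criterion_int[OF assms])
qed

lemma Legendre_cong:
  "[a = b] (mod p) \<Longrightarrow> Legendre a p = Legendre b p"
  unfolding Legendre_def QuadRes_def cong_def by simp

lemma Legendre_one_left:
  fixes p :: int
  assumes "prime p"
  shows "Legendre 1 p = 1"
proof -
  have "\<not> [1 = 0] (mod p)"
    using prime_gt_1_int[OF assms] by (simp add: cong_def)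
  moreover have "QuadRes p 1" unfolding QuadRes_def by (rule exI[of _ 1]) simp
  ultimately show ?thesis by (simp add: Legendre_def)
qed

lemma Legendre_mult_self:
  fixes p :: int
  assumes "prime p" "coprime a p"
  shows "Legendre (a * a) p = 1"
proof -
  have "\<not> p dvd a"
    using assms by (metis coprime_absorb_right not_prime_unit)
  then have "\<not> [a * a = 0] (mod p)"
    using assms(1) by (simp add: cong_0_iff prime_dvd_mult_iff)
  moreover have "QuadRes p (a * a)"
    unfolding QuadRes_def by (rule exI[of _ a]) (simp add: power2_eq_square)
  ultimately show ?thesis by (simp add: Legendre_def)
qed

text \<open>\<open>chi4\<close> is the nontrivial character modulo 4, i.e.\ \<open>(-1)^((n-1)/2)\<close> on odd \<open>n\<close>;
  \<open>qr_sign m n\<close> is the sign \<open>(-1)^((m-1)/2 \<cdot> (n-1)/2)\<close> of quadratic reciprocity.\<close>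

definition chi4 :: "int \<Rightarrow> int" where
  "chi4 n = (if n mod 4 = 1 then 1 else -1)"

definition qr_sign :: "int \<Rightarrow> int \<Rightarrow> int" where
  "qr_sign m n = (if m mod 4 = 3 \<and> n mod 4 = 3 then -1 else 1)"

lemma odd_mod_4_cases:
  fixes n :: int
  assumes "odd n"
  obtains "n mod 4 = 1" | "n mod 4 = 3"
proof -
  have "n mod 4 = 1 \<or> n mod 4 = 3" using assms by presburger
  then show ?thesis using that by blast
qed

lemma even_half_pred_iff:
  fixes n :: int
  assumes "odd n" "n > 0"
  shows "even (nat ((n - 1) div 2)) \<longleftrightarrow> n mod 4 = 1"
  using assms by (simp add: even_nat_iff) presburger

lemma chi4_mult:
  fixes m n :: int
  assumes "odd m" "odd n"
  shows "chi4 (m * n) = chi4 m * chi4 n"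
proof -
  have "(m * n) mod 4 = (m mod 4) * (n mod 4) mod 4" by (simp add: mod_mult_eq)
  then show ?thesis
    using assms by (cases rule: odd_mod_4_cases[OF assms(1)];
                    cases rule: odd_mod_4_cases[OF assms(2)]) (simp_all add: chi4_def)
qed

lemma qr_sign_commute: "qr_sign m n = qr_sign n m"
  unfolding qr_sign_def by auto

lemma qr_sign_mult_right:
  fixes a b :: int
  assumes "odd a" "odd b"
  shows "qr_sign m (a * b) = qr_sign m a * qr_sign m b"
proof -
  have "(a * b) mod 4 = (a mod 4) * (b mod 4) mod 4" by (simp add: mod_mult_eq)
  then show ?thesis
    using assms by (cases rule: odd_mod_4_cases[OF assms(1)];
                    cases rule: odd_mod_4_cases[OF assms(2)]) (auto simp: qr_sign_def)
qed

lemma Legendre_minus_one: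
  fixes p :: int
  assumes "prime p" "p > 2"
  shows "Legendre (-1) p = chi4 p"
proof (rule Legendre_eqI[OF assms])
  have "odd p" using assms prime_odd_int by blast
  then have "chi4 p = (-1) ^ nat ((p - 1) div 2)"
    using even_half_pred_iff[of p] assms(2) by (auto simp: chi4_def)
  then show "[chi4 p = (-1) ^ nat ((p - 1) div 2)] (mod p)" by simp
qed (simp add: chi4_def)

lemma Legendre_reciprocity:
  fixes p q :: int
  assumes "prime p" "p > 2" "prime q" "q > 2" "p \<noteq> q"
  shows "Legendre p q * Legendre q p = qr_sign p q"
proof -
  have "odd p" "odd q" using assms prime_odd_int by blast+
  have "Legendre p q * Legendre q p = (-1) ^ (nat ((p - 1) div 2) * nat ((q - 1) div 2))"
    using Quadratic_Reciprocity_int[of p q] assms by (simp add: nat_mult_distrib)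
  then show ?thesis
    using even_half_pred_iff[OF \<open>odd p\<close>] even_half_pred_iff[OF \<open>odd q\<close>] assms
    by (cases rule: odd_mod_4_cases[OF \<open>odd p\<close>]; cases rule: odd_mod_4_cases[OF \<open>odd q\<close>])
       (auto simp: qr_sign_def)
qed

lemma Jacobi_eq_prod_superset:
  fixes n :: int
  assumes "finite P" "\<forall>p\<in>P. prime p" "prime_factors n \<subseteq> P" "n \<noteq> 0"
  shows "Jacobi a n = (\<Prod>p\<in>P. Legendre a p ^ multiplicity p n)"
  unfolding Jacobi_def
proof (rule prod.mono_neutral_left[OF assms(1,3)], intro ballI)
  fix p assume "p \<in> P - prime_factors n"
  then have "\<not> p dvd n" using assms(2,4) by (auto simp: in_prime_factors_iff)
  then show "Legendre a p ^ multiplicity p n = 1" by (simp add: not_dvd_imp_multiplicity_0)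
qed

lemma Jacobi_mult_right:
  fixes m n :: int
  assumes "m \<noteq> 0" "n \<noteq> 0"
  shows "Jacobi a (m * n) = Jacobi a m * Jacobi a n"
proof -
  define P where "P = prime_factors m \<union> prime_factors n"
  have P: "finite P" "\<forall>p\<in>P. prime p" unfolding P_def by auto
  have "Jacobi a (m * n) = (\<Prod>p\<in>P. Legendre a p ^ multiplicity p (m * n))"
    using assms by (intro Jacobi_eq_prod_superset[OF P]) (auto simp: P_def prime_factors_product)
  also have "\<dots> = (\<Prod>p\<in>P. Legendre a p ^ multiplicity p m * Legendre a p ^ multiplicity p n)"
  proof (intro prod.cong refl)
    fix p assume "p \<in> P"
    then have "prime_elem p" using P(2) prime_imp_prime_elem by blast
    then show "Legendre a p ^ multiplicity p (m * n)
        = Legendre a p ^ multiplicity p m * Legendre a p ^ multiplicity p n"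
      using assms by (simp add: prime_elem_multiplicity_mult_distrib power_add)
  qed
  also have "\<dots> = Jacobi a m * Jacobi a n"
    unfolding prod.distrib using assms
    by (subst (1 2) Jacobi_eq_prod_superset[OF P]) (auto simp: P_def)
  finally show ?thesis .
qed

lemma odd_prime_factor_gt_2:
  fixes n :: int
  assumes "odd n" "p \<in> prime_factors n"
  shows "p > 2"
proof -
  have "prime p" "p dvd n" using assms by (auto simp: in_prime_factors_iff)
  moreover have "p \<noteq> 2" using assms(1) \<open>p dvd n\<close> by auto
  ultimately show ?thesis using prime_ge_2_int[of p] by force
qed

lemma Jacobi_mult_left:
  fixes n :: int
  assumes "odd n"
  shows "Jacobi (a * b) n = Jacobi a n * Jacobi b n"
  unfolding Jacobi_def prod.distrib[symmetric] power_mult_distrib[symmetric]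
  using odd_prime_factor_gt_2[OF assms] by (intro prod.cong refl) (simp add: Legendre_mult_left in_prime_factors_imp_prime)

lemma Jacobi_cong:
  fixes n :: int
  assumes "[a = b] (mod n)"
  shows "Jacobi a n = Jacobi b n"
  unfolding Jacobi_def
proof (intro prod.cong refl)
  fix p assume "p \<in> prime_factors n"
  then have "[a = b] (mod p)"
    using assms cong_dvd_modulus by (auto simp: in_prime_factors_iff)
  then show "Legendre a p ^ multiplicity p n = Legendre b p ^ multiplicity p n"
    by (simp add: Legendre_cong)
qed

lemma Jacobi_prime:
  fixes q :: int
  assumes "prime q"
  shows "Jacobi a q = Legendre a q"
proof -
  have "multiplicity q q = 1" using assms multiplicity_prime prime_imp_prime_elem by blast
  then show ?thesis using assms by (simp add: Jacobi_def prime_factorization_prime)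
qed

lemma Jacobi_one_left: "Jacobi 1 n = 1"
  unfolding Jacobi_def by (intro prod.neutral) (auto simp: Legendre_one_left in_prime_factors_iff)

lemma Jacobi_one_right: "Jacobi a 1 = 1"
  unfolding Jacobi_def by simp

lemma Jacobi_mult_self:
  fixes n :: int
  assumes "odd n" "coprime a n"
  shows "Jacobi a n * Jacobi a n = 1"
proof -
  have "Jacobi (a * a) n = 1"
    unfolding Jacobi_def
  proof (intro prod.neutral ballI)
    fix p assume "p \<in> prime_factors n"
    then have "prime p" "coprime a p"
      using assms(2) by (auto simp: in_prime_factors_iff intro: coprime_imp_coprime dvd_trans)
    then show "Legendre (a * a) p ^ multiplicity p n = 1" by (simp add: Legendre_mult_self)
  qed
  then show ?thesis using Jacobi_mult_left[OF assms(1)] by simp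
qed

lemma odd_pos_int_induct [consumes 2, case_names one prime_mult]:
  fixes n :: int
  assumes "odd n" "n > 0" and "P 1"
    and "\<And>q n. prime q \<Longrightarrow> q > 2 \<Longrightarrow> odd n \<Longrightarrow> n > 0 \<Longrightarrow> P n \<Longrightarrow> P (q * n)"
  shows "P n"
  using assms(1,2)
proof (induction "nat n" arbitrary: n rule: less_induct)
  case less
  show ?case
  proof (cases "n = 1")
    case True
    then show ?thesis using assms(3) by simp
  next
    case False
    then obtain q where q: "prime q" "q dvd n"
      using less.prems prime_divisor_exists[of n] by force
    then obtain m where m: "n = q * m" by blast
    have "q > 2"
      using odd_prime_factor_gt_2[OF less.prems(1)] q less.prems(2)
      by (simp add: in_prime_factors_iff)
    have "m > 0" "odd m"
      using m less.prems \<open>q > 2\<close> by (auto simp: zero_less_mult_iff)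
    moreover have "m < n" using m \<open>q > 2\<close> \<open>m > 0\<close> by simp
    ultimately have "P m" using less.hyps[of m] by simp
    then show ?thesis using assms(4)[OF q(1) \<open>q > 2\<close> \<open>odd m\<close> \<open>m > 0\<close>] m by simp
  qed
qed

lemma Jacobi_minus_one:
  fixes n :: int
  assumes "odd n" "n > 0"
  shows "Jacobi (-1) n = chi4 n"
  using assms
proof (induction n rule: odd_pos_int_induct)
  case one
  then show ?case by (simp add: Jacobi_one_right chi4_def)
next
  case (prime_mult q n)
  have "odd q" using prime_mult prime_odd_int by blast
  have "Jacobi (-1) (q * n) = Jacobi (-1) q * Jacobi (-1) n"
    using prime_mult by (intro Jacobi_mult_right) auto
  also have "\<dots> = chi4 q * chi4 n"
    using prime_mult by (simp add: Jacobi_prime Legendre_minus_one)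
  also have "\<dots> = chi4 (q * n)" using chi4_mult \<open>odd q\<close> prime_mult by simp
  finally show ?case .
qed

lemma Jacobi_reciprocity_prime:
  fixes p n :: int
  assumes "prime p" "p > 2" "odd n" "n > 0" "coprime p n"
  shows "Jacobi p n * Jacobi n p = qr_sign p n"
  using assms(3-5)
proof (induction n rule: odd_pos_int_induct)
  case one
  then show ?case using assms(1) by (simp add: Jacobi_one_right Jacobi_one_left qr_sign_def)
next
  case (prime_mult q n)
  have "odd p" using assms prime_odd_int by blast
  have "p \<noteq> q" using prime_mult.prems assms(1) by auto
  have "Jacobi p (q * n) * Jacobi (q * n) p = (Jacobi p q * Jacobi q p) * (Jacobi p n * Jacobi n p)"
    using prime_mult Jacobi_mult_left[OF \<open>odd p\<close>] by (simp add: Jacobi_mult_right)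
  also have "\<dots> = qr_sign p q * qr_sign p n"
    using prime_mult assms \<open>p \<noteq> q\<close> by (simp add: Jacobi_prime Legendre_reciprocity)
  also have "\<dots> = qr_sign p (q * n)"
    using prime_mult prime_odd_int by (simp add: qr_sign_mult_right)
  finally show ?case .
qed

lemma Jacobi_reciprocity:
  fixes m n :: int
  assumes "odd m" "m > 0" "odd n" "n > 0" "coprime m n"
  shows "Jacobi m n * Jacobi n m = qr_sign m n"
  using assms(1,2,5)
proof (induction m rule: odd_pos_int_induct)
  case one
  then show ?case by (simp add: Jacobi_one_right Jacobi_one_left qr_sign_def)
next
  case (prime_mult q m)
  have "odd q" using prime_mult prime_odd_int by blast
  have "Jacobi (q * m) n * Jacobi n (q * m) = (Jacobi q n * Jacobi n q) * (Jacobi m n * Jacobi n m)"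
    using prime_mult Jacobi_mult_left[OF assms(3)] by (simp add: Jacobi_mult_right)
  also have "\<dots> = qr_sign q n * qr_sign m n"
    using prime_mult assms(3,4) by (simp add: Jacobi_reciprocity_prime)
  also have "\<dots> = qr_sign (q * m) n"
    using qr_sign_mult_right[OF \<open>odd q\<close> prime_mult(3)] by (simp add: qr_sign_commute)
  finally show ?case .
qed

lemma Jacobi_adjacent_fractions:
  fixes s t s' t' :: int
  assumes det: "s' * t - s * t' = (-1) ^ k"
    and "odd t" "t > 0" "odd t'" "t' > 0"
  shows "Jacobi s t =
           (if (t mod 4 = 1 \<and> t' mod 4 = 3 \<and> odd k) \<or> (t mod 4 = 3 \<and> t' mod 4 = 1 \<and> even k)
            then -1 else 1) * Jacobi s' t'"
proof -
  define e :: int where "e = (-1) ^ k"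
  have det_e: "s' * t - s * t' = e" using det by (simp add: e_def)
  have "is_unit e" by (simp add: e_def)
  have unit_if_dvd_det: "is_unit c" if "c dvd s' * t - s * t'" for c
    using that det_e \<open>is_unit e\<close> dvd_unit_imp_unit by metis
  have "coprime t' t" "coprime s' t'"
    by (auto intro!: coprimeI unit_if_dvd_det)
  have "s * t' - (- e) = t * s'" "s' * t - e = t' * s"
    using det_e by (simp_all add: algebra_simps)
  then have "[s * t' = - e] (mod t)" "[s' * t = e] (mod t')"
    unfolding cong_iff_dvd_diff by simp_all
  then have sym_t: "Jacobi s t * Jacobi t' t = Jacobi (- e) t"
    and sym_t': "Jacobi s' t' * Jacobi t t' = Jacobi e t'"
    using Jacobi_mult_left[OF \<open>odd t\<close>] Jacobi_mult_left[OF \<open>odd t'\<close>] Jacobi_cong by metis+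
  have recip: "Jacobi t' t * Jacobi t t' = qr_sign t' t"
    using Jacobi_reciprocity \<open>coprime t' t\<close> assms(2-5) by blast
  have "Jacobi s t = Jacobi s t * (Jacobi s' t' * Jacobi s' t') * (qr_sign t' t * qr_sign t' t)"
    using Jacobi_mult_self[OF \<open>odd t'\<close> \<open>coprime s' t'\<close>] by (simp add: qr_sign_def)
  also have "\<dots> = (Jacobi s t * Jacobi t' t) * (Jacobi s' t' * Jacobi t t') * qr_sign t' t * Jacobi s' t'"
    using recip by (simp add: algebra_simps)
  also have "\<dots> = Jacobi (- e) t * Jacobi e t' * qr_sign t' t * Jacobi s' t'"
    using sym_t sym_t' by simp
  finally have "Jacobi s t = Jacobi (- e) t * Jacobi e t' * qr_sign t' t * Jacobi s' t'" .
  moreover have "Jacobi (- e) t * Jacobi e t' = (if even k then chi4 t else chi4 t')"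
    using assms(2-5) by (simp add: e_def Jacobi_one_left Jacobi_minus_one)
  ultimately show ?thesis
    by (cases rule: odd_mod_4_cases[OF \<open>odd t\<close>]; cases rule: odd_mod_4_cases[OF \<open>odd t'\<close>])
       (auto simp: chi4_def qr_sign_def)
qed

lemma cf_a_nonneg: "cf_a x (Suc n) \<ge> 0"
  using frac_ge_0[of "cf_rem x n"] by (simp add: cf_a_def)

lemma cf_t_nonneg: "cf_t x n \<ge> 0"
proof (induction n rule: cf_t.induct)
  case (3 x n)
  then show ?case using cf_a_nonneg[of x "Suc n"] by simp
qed (use cf_a_nonneg[of _ 0] in simp_all)

lemma cf_det: "cf_s x (Suc k) * cf_t x k - cf_s x k * cf_t x (Suc k) = (-1) ^ k"
  by (induction k) (simp_all add: algebra_simps)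

theorem lemma1:
  fixes x :: real and k :: nat
  assumes "x \<notin> \<rat>"
    and "odd (cf_t x k)" and "odd (cf_t x (Suc k))"
  shows "(if (cf_t x k mod 4 = 1 \<and> cf_t x (Suc k) mod 4 = 3 \<and> odd k) \<or>
             (cf_t x k mod 4 = 3 \<and> cf_t x (Suc k) mod 4 = 1 \<and> even k)
          then Jacobi (cf_s x k) (cf_t x k) = - Jacobi (cf_s x (Suc k)) (cf_t x (Suc k))
          else Jacobi (cf_s x k) (cf_t x k) = Jacobi (cf_s x (Suc k)) (cf_t x (Suc k)))"
proof -
  have "cf_t x k > 0" "cf_t x (Suc k) > 0"
    using assms(2,3) cf_t_nonneg[of x k] cf_t_nonneg[of x "Suc k"] by (auto intro: le_neq_trans)
  with assms(2,3) show ?thesis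
    using Jacobi_adjacent_fractions[OF cf_det] by simp
qed

end
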